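(* Let $\Sigma$ be a finite alphabet and $w\in\Sigma^\star$. If every symbol of $\Sigma$ occurs in $w$ more than $|\Sigma|$ times, then the answer to Disjoint Factors on $w$ is positive, i.e., there exist pairwise disjoint (contiguous) subwords $w_a$ of $w$, one for each $a\in\Sigma$, such that each $w_a$ has length at least $2$ and begins and ends with $a$. *)

theory Defs
  imports Main
begin

text \<open>A factor (contiguous subword) of w is given by positions i \<le> j, namely
  w!i, ..., w!j (i.e. take (j - i + 1) (drop i w)).\<close>

definition disjoint_factors :: "'a set \<Rightarrow> 'a list \<Rightarrow> bool" where
  "disjoint_factors \<Sigma> w \<longleftrightarrow>
     (\<exists>s e :: 'a \<Rightarrow> nat.
        (\<forall>a\<in>\<Sigma>. s a < e a \<and> e a < length w \<and> w ! s a = a \<and> w ! e a = a) \<and>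
        (\<forall>a\<in>\<Sigma>. \<forall>b\<in>\<Sigma>. a \<noteq> b \<longrightarrow> {s a..e a} \<inter> {s b..e b} = {}))"

end

theory Submission
  imports Defs
begin

text \<open>Cut w just after the first position j at which some symbol a repeats. The factor from
  an earlier occurrence of a up to j serves a, and every other symbol occurs at most once in
  the cut-off prefix, hence more than |\<Sigma>| - 1 times in the rest of the word. Induction on
  |\<Sigma>| handles the remaining symbols there.\<close>

lemma first_repetition:
  assumes "b \<in> S" and "2 \<le> count_list w b"
  obtains i j where "i < j" "j < length w" "w ! i = w ! j" "w ! j \<in> S"
    and "\<forall>c\<in>S. count_list (take j w) c \<le> 1"
proof -
  define m where "m = (LEAST m. \<exists>c\<in>S. 2 \<le> count_list (take m w) c)"
  have "\<exists>c\<in>S. 2 \<le> count_list (take m w) c"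
    unfolding m_def by (rule LeastI[of _ "length w"]) (use assms in auto)
  then obtain c where c: "c \<in> S" "2 \<le> count_list (take m w) c" by blast
  then obtain j where m: "m = Suc j" by (cases m) auto
  have before_j: "\<forall>c\<in>S. count_list (take j w) c \<le> 1"
    using not_less_Least[of j "\<lambda>m. \<exists>c\<in>S. 2 \<le> count_list (take m w) c"]
    unfolding m_def[symmetric] m by fastforce
  have j: "j < length w"
  proof (rule ccontr)
    assume "\<not> j < length w"
    then have "take m w = take j w" by (simp add: m)
    with c before_j show False by fastforce
  qed
  then have "take m w = take j w @ [w ! j]" by (simp add: m take_Suc_conv_app_nth)
  with c before_j have c_at_j: "c = w ! j" and "count_list (take j w) c \<noteq> 0"
    by (fastforce split: if_splits)+
  then have "c \<in> set (take j w)" by (simp add: count_list_0_iff)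
  then obtain i where "i < j" "w ! i = w ! j"
    using c_at_j by (auto simp: in_set_conv_nth)
  with that j c(1) before_j c_at_j show thesis by blast
qed

lemma disjoint_factors_insert_prefix_factor:
  assumes "disjoint_factors \<Sigma> (drop (Suc j) w)"
    and "i < j" "j < length w" "w ! i = a" "w ! j = a"
  shows "disjoint_factors (insert a \<Sigma>) w"
proof -
  from assms(1) obtain s e where
    factors: "\<forall>b\<in>\<Sigma>. s b < e b \<and> e b < length w - Suc j
      \<and> w ! (Suc j + s b) = b \<and> w ! (Suc j + e b) = b"
    and disjoint: "\<forall>b\<in>\<Sigma>. \<forall>c\<in>\<Sigma>. b \<noteq> c \<longrightarrow> {s b..e b} \<inter> {s c..e c} = {}"
    unfolding disjoint_factors_def using assms(3) by auto
  define s' where "s' b = (if b = a then i else Suc j + s b)" for b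
  define e' where "e' b = (if b = a then j else Suc j + e b)" for b
  have "\<forall>b\<in>insert a \<Sigma>. s' b < e' b \<and> e' b < length w \<and> w ! s' b = b \<and> w ! e' b = b"
    using factors assms(2-) by (auto simp: s'_def e'_def)
  moreover have "\<forall>b\<in>insert a \<Sigma>. \<forall>c\<in>insert a \<Sigma>. b \<noteq> c \<longrightarrow> {s' b..e' b} \<inter> {s' c..e' c} = {}"
  proof (intro ballI impI)
    fix b c assume "b \<in> insert a \<Sigma>" "c \<in> insert a \<Sigma>" "b \<noteq> c"
    moreover have "{s b + Suc j..e b + Suc j} \<inter> {s c + Suc j..e c + Suc j} = {}"
      if "b \<in> \<Sigma>" "c \<in> \<Sigma>" "b \<noteq> c" for b c
      using disjoint that by fastforce
    ultimately show "{s' b..e' b} \<inter> {s' c..e' c} = {}"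
      by (auto simp: s'_def e'_def add.commute)
  qed
  ultimately show ?thesis unfolding disjoint_factors_def by blast
qed

lemma disjoint_factors_if_count_gt_card:
  assumes "finite \<Sigma>" and "\<forall>a\<in>\<Sigma>. card \<Sigma> < count_list w a"
  shows "disjoint_factors \<Sigma> w"
  using assms
proof (induction "card \<Sigma>" arbitrary: \<Sigma> w)
  case 0
  then show ?case by (simp add: disjoint_factors_def)
next
  case (Suc n)
  then obtain b where "b \<in> \<Sigma>" by fastforce
  with Suc.prems Suc.hyps(2) have "2 \<le> count_list w b" by fastforce
  then obtain i j where ij: "i < j" "j < length w" "w ! i = w ! j" "w ! j \<in> \<Sigma>"
    and before_j: "\<forall>c\<in>\<Sigma>. count_list (take j w) c \<le> 1"
    using first_repetition \<open>b \<in> \<Sigma>\<close> by metis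
  define a where "a = w ! j"
  have card: "card (\<Sigma> - {a}) = n"
    using Suc.hyps(2) Suc.prems(1) ij(4) by (simp add: a_def)
  have "card (\<Sigma> - {a}) < count_list (drop (Suc j) w) c" if c: "c \<in> \<Sigma> - {a}" for c
  proof -
    have "count_list w c = count_list (take (Suc j) w) c + count_list (drop (Suc j) w) c"
      by (metis append_take_drop_id count_list_append)
    moreover have "count_list (take (Suc j) w) c = count_list (take j w) c"
      using c ij(2) by (auto simp: take_Suc_conv_app_nth a_def)
    ultimately show ?thesis
      using before_j Suc.prems(2) Suc.hyps(2) c card by fastforce
  qed
  then have "disjoint_factors (\<Sigma> - {a}) (drop (Suc j) w)"
    using Suc.hyps(1)[OF card[symmetric]] Suc.prems(1) by blast
  then have "disjoint_factors (insert a (\<Sigma> - {a})) w"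
    using disjoint_factors_insert_prefix_factor ij(1-3) a_def by metis
  then show ?case using ij(4) by (simp add: a_def insert_absorb)
qed

theorem lemma32:
  fixes \<Sigma> :: "'a set" and w :: "'a list"
  assumes "finite \<Sigma>"
    and "set w \<subseteq> \<Sigma>"
    and "\<forall>a\<in>\<Sigma>. count_list w a > card \<Sigma>"
  shows "disjoint_factors \<Sigma> w"
  using assms(1,3) by (rule disjoint_factors_if_count_gt_card)

end
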